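(* Let $A\in\mathbb{C}^{n\times n}$ be positive definite (i.e. $A+A^*$ is Hermitian positive definite), let $C\in\mathbb{C}^{m\times m}$ be positive semidefinite (i.e. $C+C^*$ is Hermitian positive semidefinite), let $B\in\mathbb{C}^{m\times n}$ with $m\le n$, and let $$\mathcal{A}=\begin{bmatrix}A&B^*\\-B&C\end{bmatrix}$$ be singular, with linear system $\mathcal{A}u=b$. Write $A=A_P+A_S$ with $A_P$ positive definite and $A_S$ skew-Hermitian, $C=C_P+C_S$ with $C_P$ positive semidefinite and $C_S$ skew-Hermitian, and $B=B_P+B_S$ an arbitrary splitting. Let $P_\alpha\in\mathbb{C}^{n\times n}$, $P_\beta\in\mathbb{C}^{m\times m}$ be Hermitian positive definite, set $$\mathcal{P}=\begin{bmatrix}A_P&B_P^*\\-B_P&C_P\end{bmatrix},\quad \mathcal{S}=\begin{bmatrix}A_S&B_S^*\\-B_S&C_S\end{bmatrix},\quad \Sigma=\begin{bmatrix}P_\alpha&0\\0&P_\beta\end{bmatrix},$$ and consider the EPSS iteration $u^{k+1}=\Gamma_{\mathrm{EPSS}}u^k+c$ with $\Gamma_{\mathrm{EPSS}}=(\Sigma+\mathcal{S})^{-1}(\Sigma-\mathcal{P})(\Sigma+\mathcal{P})^{-1}(\Sigma-\mathcal{S})$ and $c=2(\Sigma+\mathcal{S})^{-1}\Sigma(\Sigma+\mathcal{P})^{-1}b$. Suppose $\mathrm{null}(C+C^* )\subseteq\mathrm{null}(C)$ and that at least one of the following holds: (1) for all nonzero $r\in\mathrm{null}(C+C^* )$, $r^*(P_\beta+C_SP_\beta^{-1}C_S^*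 )r\neq r^*(B_SP_\alpha^{-1}B_P^* )r$; (2) every nonzero $r\in\mathrm{null}(C+C^* )$ satisfies $r^*(B_SP_\alpha^{-1}B_P^* )r\le 0$; (3) $\mathrm{null}(C+C^* )\subseteq\mathrm{null}(B_S^* )\cup\mathrm{null}(B_P^* )$; (4) $C$ is positive definite, or $B_S=0$, or $B_P=0$. Then the EPSS iteration is semi-convergent, i.e. it converges to a solution of $\mathcal{A}u=b$ for every initial guess $u^0$.
   Context: $\mathrm{null}(\cdot)$ denotes the null space. An iteration for a singular system is called semi-convergent if it converges to a solution of the system for any initial guess; the system $\mathcal{A}u=b$ is understood to be consistent (solvable). In condition (2), "$\le 0$" means the (complex) number is real and nonpositive. *)

theory Defs
  imports "HOL-Analysis.Analysis"
begin

definition cadj :: "complex^'n^'m \<Rightarrow> complex^'m^'n" where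
  "cadj M = (\<chi> i j. cnj (M $ j $ i))"

definition qform :: "complex^'n^'n \<Rightarrow> complex^'n \<Rightarrow> complex" where
  "qform M x = (\<Sum>i\<in>UNIV. cnj (x $ i) * (M *v x) $ i)"

definition hermitian :: "complex^'n^'n \<Rightarrow> bool" where
  "hermitian M \<longleftrightarrow> cadj M = M"

definition skew_hermitian :: "complex^'n^'n \<Rightarrow> bool" where
  "skew_hermitian M \<longleftrightarrow> cadj M = - M"

definition hpd :: "complex^'n^'n \<Rightarrow> bool" where
  "hpd M \<longleftrightarrow> hermitian M \<and> (\<forall>x. x \<noteq> 0 \<longrightarrow> Im (qform M x) = 0 \<and> Re (qform M x) > 0)"

definition hpsd :: "complex^'n^'n \<Rightarrow> bool" where
  "hpsd M \<longleftrightarrow> hermitian M \<and> (\<forall>x. Im (qform M x) = 0 \<and> Re (qform M x) \<ge> 0)"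

text \<open>Paper's (non-Hermitian) positive (semi)definiteness: M + M^* is HPD / HPSD.\<close>
definition pos_def :: "complex^'n^'n \<Rightarrow> bool" where
  "pos_def M \<longleftrightarrow> hpd (M + cadj M)"

definition pos_semidef :: "complex^'n^'n \<Rightarrow> bool" where
  "pos_semidef M \<longleftrightarrow> hpsd (M + cadj M)"

definition nullsp :: "complex^'n^'m \<Rightarrow> (complex^'n) set" where
  "nullsp M = {x. M *v x = 0}"

definition block :: "complex^'n^'n \<Rightarrow> complex^'m^'n \<Rightarrow> complex^'n^'m \<Rightarrow> complex^'m^'m
    \<Rightarrow> complex^('n + 'm)^('n + 'm)" where
  "block A B C D = (\<chi> i j. case i of
      Inl a \<Rightarrow> (case j of Inl b \<Rightarrow> A $ a $ b | Inr b \<Rightarrow> B $ a $ b)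
    | Inr a \<Rightarrow> (case j of Inl b \<Rightarrow> C $ a $ b | Inr b \<Rightarrow> D $ a $ b))"

definition semi_convergent :: "complex^'k^'k \<Rightarrow> complex^'k \<Rightarrow> complex^'k^'k \<Rightarrow> complex^'k \<Rightarrow> bool" where
  "semi_convergent G c M b \<longleftrightarrow>
     (\<forall>u0. \<exists>u. M *v u = b \<and> (\<lambda>k. ((\<lambda>v. G *v v + c) ^^ k) u0) \<longlonglongrightarrow> u)"

end

(*
  Let z = (Sigma + P)^-1 (Sigma - S) v be the half step of the EPSS iteration matrix Gamma.
  For the Hermitian norm |v|^2 = ((Sigma + S) v)^H Sigma^-1 ((Sigma + S) v) one has
  |Gamma v|^2 = |v|^2 - 2 Re z^H (P + P^H) z, so Gamma is nonexpansive, and equality forces the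
  upper block of z to vanish and its lower block r to lie in null(C + C^H). If moreover
  Gamma v = lambda v with |lambda| = 1 and lambda ~= 1, combining the two half steps yields
  (P_beta + C_S P_beta^-1 C_S^H) r = B_S P_alpha^-1 B_P^H r with r ~= 0, which each of the
  conditions (1)-(4) rules out. So 1 is the only unimodular eigenvalue of Gamma.

  A matrix that is nonexpansive in a Hermitian norm and has no unimodular eigenvalue other
  than 1 has convergent powers: a cluster point of a bounded orbit lies in the largest
  invariant subspace on which the norm is preserved, and the matrix is the identity there,
  because an eigenvector in the image of that subspace under Gamma - I would start a Jordan
  chain with an unbounded orbit. Fixed points of Gamma lie in the null space of the saddle
  point matrix, so the iterates converge to a solution.
*)

theory Submission
  imports Defs "HOL-Computational_Algebra.Fundamental_Theorem_Algebra"
begin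

definition cinner :: "complex^'n \<Rightarrow> complex^'n \<Rightarrow> complex" where
  "cinner x y = (\<Sum>i\<in>UNIV. cnj (x $ i) * y $ i)"

lemma qform_conv_cinner: "qform M x = cinner x (M *v x)"
  by (simp add: qform_def cinner_def)

lemma cinner_add_left: "cinner (x + y) z = cinner x z + cinner y z"
  and cinner_add_right: "cinner x (y + z) = cinner x y + cinner x z"
  and cinner_diff_left: "cinner (x - y) z = cinner x z - cinner y z"
  and cinner_diff_right: "cinner x (y - z) = cinner x y - cinner x z"
  and cinner_minus_left: "cinner (- x) y = - cinner x y"
  and cinner_minus_right: "cinner x (- y) = - cinner x y"
  and cinner_smult_left: "cinner (c *s x) y = cnj c * cinner x y"
  and cinner_smult_right: "cinner x (c *s y) = c * cinner x y"
  by (simp_all add: cinner_def sum.distrib sum_subtractf sum_negf sum_distrib_left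
      algebra_simps)

lemmas cinner_simps = cinner_add_left cinner_add_right cinner_diff_left cinner_diff_right
  cinner_minus_left cinner_minus_right cinner_smult_left cinner_smult_right

lemma cinner_zero_left [simp]: "cinner 0 x = 0"
  and cinner_zero_right [simp]: "cinner x 0 = 0"
  by (simp_all add: cinner_def)

lemma cnj_cinner: "cnj (cinner x y) = cinner y x"
  by (simp add: cinner_def mult.commute)

lemma cinner_self: "cinner x x = of_real ((norm x)\<^sup>2)"
proof -
  have "cnj z * z = of_real ((cmod z)\<^sup>2)" for z
    by (metis complex_norm_square mult.commute)
  then have "cinner x x = of_real (\<Sum>i\<in>UNIV. (cmod (x $ i))\<^sup>2)"
    by (simp add: cinner_def)
  then show ?thesis
    by (simp add: norm_vec_def L2_set_def sum_nonneg)
qed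

lemma cinner_adjoint: "cinner ((M::complex^'n^'m) *v x) y = cinner x (cadj M *v y)"
proof -
  have "cinner (M *v x) y = (\<Sum>i\<in>UNIV. \<Sum>j\<in>UNIV. cnj (M $ i $ j) * cnj (x $ j) * y $ i)"
    by (simp add: cinner_def matrix_vector_mult_def cnj_sum sum_distrib_left sum_distrib_right
        mult_ac)
  also have "\<dots> = (\<Sum>j\<in>UNIV. \<Sum>i\<in>UNIV. cnj (M $ i $ j) * cnj (x $ j) * y $ i)"
    by (rule sum.swap)
  also have "\<dots> = cinner x (cadj M *v y)"
    by (simp add: cinner_def matrix_vector_mult_def cadj_def sum_distrib_left mult_ac)
  finally show ?thesis .
qed

lemma cadj_cadj [simp]: "cadj (cadj M) = M"
  and cadj_zero [simp]: "cadj 0 = 0"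
  and cadj_add: "cadj (M + N) = cadj M + cadj N"
  and cadj_diff: "cadj (M - N) = cadj M - cadj N"
  and cadj_uminus: "cadj (- M) = - cadj M"
  and cadj_mat_1 [simp]: "cadj (mat 1) = mat 1"
  by (simp_all add: cadj_def vec_eq_iff mat_def)

lemma cadj_matrix_mult: "cadj ((M::complex^'n^'m) ** (N::complex^'k^'n)) = cadj N ** cadj M"
  by (simp add: cadj_def vec_eq_iff matrix_matrix_mult_def mult.commute)

lemma matrix_vector_mult_uminus_left: "(- M) *v x = - (M *v x)" for M :: "complex^'n^'m"
  by (simp add: matrix_vector_mult_def vec_eq_iff sum_negf)

lemma qform_zero [simp]: "qform M 0 = 0"
  by (simp add: qform_def)

lemma qform_smult: "qform M (c *s x) = (cmod c)\<^sup>2 * qform M x"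
proof -
  have "c * cnj c = of_real ((cmod c)\<^sup>2)"
    by (rule complex_norm_square[symmetric])
  then show ?thesis
    by (simp add: qform_conv_cinner vector_scalar_commute cinner_simps)
qed

lemma qform_add: "qform (M + N) x = qform M x + qform N x"
  by (simp add: qform_def matrix_vector_mult_add_rdistrib distrib_left sum.distrib)

lemma qform_congruence: "qform (K ** M ** cadj K) x = qform M (cadj K *v x)"
  using cinner_adjoint[of "cadj K" x]
  by (simp add: qform_conv_cinner matrix_vector_mul_assoc[symmetric])

lemma Re_qform_hermitian_part: "Re (qform K x) = Re (qform (K + cadj K) x) / 2"
proof -
  have "qform (cadj K) x = cnj (qform K x)"
    by (simp add: qform_conv_cinner cinner_adjoint[symmetric] cnj_cinner)
  then show ?thesis
    by (simp add: qform_def matrix_vector_mult_add_rdistrib distrib_left sum.distrib)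
qed

lemma hermitian_cinner: "hermitian M \<Longrightarrow> cinner (M *v x) y = cinner x (M *v y)"
  by (simp add: hermitian_def cinner_adjoint)

lemma hermitian_Im_qform: "hermitian M \<Longrightarrow> Im (qform M x) = 0"
  by (metis Reals_cnj_iff cnj_cinner complex_is_Real_iff hermitian_cinner qform_conv_cinner)

lemma invertible_if_kernel_trivial:
  fixes M :: "complex^'n^'n"
  assumes "\<And>x. M *v x = 0 \<Longrightarrow> x = 0"
  shows "invertible M"
  using assms matrix_left_invertible_ker invertible_left_inverse by blast

lemma matrix_inv_right: "invertible M \<Longrightarrow> M ** matrix_inv M = mat 1"
  and matrix_inv_left: "invertible M \<Longrightarrow> matrix_inv M ** M = mat 1"
  unfolding invertible_def matrix_inv_def by (metis (mono_tags, lifting) someI_ex)+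

lemma matrix_inv_mv_cancel:
  fixes M :: "complex^'n^'n"
  assumes "invertible M"
  shows "M *v (matrix_inv M *v x) = x" and "matrix_inv M *v (M *v x) = x"
  by (simp_all add: matrix_vector_mul_assoc matrix_inv_right matrix_inv_left assms)

lemma invertible_mv_eq_iff:
  fixes M :: "complex^'n^'n"
  shows "invertible M \<Longrightarrow> M *v x = M *v y \<longleftrightarrow> x = y"
  by (metis matrix_inv_mv_cancel(2))

lemma hpd_Re_qform_pos: "hpd M \<Longrightarrow> x \<noteq> 0 \<Longrightarrow> Re (qform M x) > 0"
  by (simp add: hpd_def)

lemma hpd_Re_qform_nonneg: "hpd M \<Longrightarrow> Re (qform M x) \<ge> 0"
  by (cases "x = 0") (auto simp: hpd_def less_imp_le)

lemma hpd_imp_hpsd: "hpd M \<Longrightarrow> hpsd M"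
  by (simp add: hpd_def hpsd_def hermitian_Im_qform hpd_Re_qform_nonneg)

lemma hpd_invertible: "hpd (M::complex^'n^'n) \<Longrightarrow> invertible M"
  by (rule invertible_if_kernel_trivial) (auto simp: hpd_def qform_conv_cinner)

lemma hpd_matrix_inv:
  fixes M :: "complex^'n^'n"
  assumes "hpd M"
  shows "hpd (matrix_inv M)"
proof -
  have inv: "invertible M" and herm: "cadj M = M"
    using assms hpd_invertible by (auto simp: hpd_def hermitian_def)
  have "cadj (matrix_inv M) = (cadj (matrix_inv M) ** cadj M) ** matrix_inv M"
    by (metis herm matrix_inv_right[OF inv] matrix_mul_assoc matrix_mul_rid)
  also have "\<dots> = matrix_inv M"
    by (simp add: cadj_matrix_mult[symmetric] matrix_inv_right[OF inv])
  finally have "hermitian (matrix_inv M)"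
    by (simp add: hermitian_def)
  moreover have "Re (qform (matrix_inv M) x) > 0" if "x \<noteq> 0" for x
  proof -
    define w where "w = matrix_inv M *v x"
    have "w \<noteq> 0"
      using that matrix_inv_mv_cancel(1)[OF inv, of x] by (auto simp: w_def)
    moreover have "qform (matrix_inv M) x = qform M w"
    proof -
      have x: "x = M *v w"
        by (simp add: w_def matrix_inv_mv_cancel(1)[OF inv])
      have "qform (matrix_inv M) x = cinner x w"
        by (simp add: qform_conv_cinner w_def)
      also have "\<dots> = cinner (M *v w) w"
        using x by simp
      finally show ?thesis
        using herm hermitian_cinner[of M w w] by (simp add: qform_conv_cinner hermitian_def)
    qed
    ultimately show ?thesis
      using assms by (simp add: hpd_Re_qform_pos)
  qed
  ultimately show ?thesis
    by (simp add: hpd_def hermitian_Im_qform)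
qed

lemma hpsd_mv_eq_0_if_qform_eq_0:
  fixes M :: "complex^'n^'n"
  assumes psd: "hpsd M" and x: "Re (qform M x) = 0"
  shows "M *v x = 0"
proof (rule ccontr)
  assume "M *v x \<noteq> 0"
  define y where "y = M *v x"
  define s where "s = (norm y)\<^sup>2"
  define q where "q = Re (qform M y)"
  define t where "t = s / (q + 1)"
  have herm: "hermitian M" and "q \<ge> 0"
    using psd by (simp_all add: hpsd_def q_def)
  have "s > 0"
    using \<open>M *v x \<noteq> 0\<close> by (simp add: s_def y_def)
  have "cinner x (M *v y) = of_real s" and "cinner y (M *v x) = of_real s"
    by (simp_all add: hermitian_cinner[OF herm, symmetric] y_def s_def cinner_self)
  then have "Re (qform M (x - of_real t *s y)) = Re (qform M x) - 2 * t * s + t * t * q"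
    by (simp add: qform_conv_cinner q_def cinner_simps matrix_vector_mult_diff_distrib
        vector_scalar_commute) argo
  also have "\<dots> = t * (t * q - 2 * s)"
    using x by (simp add: algebra_simps)
  also have "\<dots> < 0"
  proof -
    have "q / (q + 1) < 1"
      using \<open>q \<ge> 0\<close> by simp
    then have "t * q < s"
      using \<open>s > 0\<close> mult_strict_left_mono[of "q / (q + 1)" 1 s] by (simp add: t_def)
    moreover have "t > 0"
      using \<open>s > 0\<close> \<open>q \<ge> 0\<close> by (simp add: t_def)
    ultimately show ?thesis
      using \<open>s > 0\<close> by (intro mult_pos_neg) auto
  qed
  finally show False
    using psd by (simp add: hpsd_def not_le[symmetric])
qed

lemma skew_hermitian_pos_semidef: "skew_hermitian S \<Longrightarrow> pos_semidef S"
  by (simp add: skew_hermitian_def pos_semidef_def hpsd_def hermitian_def qform_def)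

lemma skew_hermitian_uminus: "skew_hermitian S \<Longrightarrow> skew_hermitian (- S)"
  by (simp add: skew_hermitian_def cadj_uminus)

lemma invertible_hpd_add_pos_semidef:
  fixes Sg K :: "complex^'n^'n"
  assumes "hpd Sg" "pos_semidef K"
  shows "invertible (Sg + K)"
proof (rule invertible_if_kernel_trivial)
  fix x assume "(Sg + K) *v x = 0"
  then have "Re (qform (Sg + K) x) = 0"
    by (simp add: qform_conv_cinner)
  then have "Re (qform Sg x) + Re (qform K x) = 0"
    by (simp add: qform_add)
  moreover have "Re (qform (K + cadj K) x) \<ge> 0"
    using assms(2) by (simp add: pos_semidef_def hpsd_def)
  then have "Re (qform K x) \<ge> 0"
    using Re_qform_hermitian_part[of K x] by simp
  ultimately show "x = 0"
    using assms(1) hpd_Re_qform_pos[of Sg x] by fastforce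
qed

definition vfst :: "'a^('n::finite + 'm::finite) \<Rightarrow> 'a^'n" where
  "vfst x = (\<chi> i. x $ Inl i)"

definition vsnd :: "'a^('n::finite + 'm::finite) \<Rightarrow> 'a^'m" where
  "vsnd x = (\<chi> i. x $ Inr i)"

lemma vec_eq_iff_vfst_vsnd: "x = y \<longleftrightarrow> vfst x = vfst y \<and> vsnd x = vsnd y"
  by (auto simp: vfst_def vsnd_def vec_eq_iff) (metis sumE)

lemma vfst_add [simp]: "vfst (x + y) = vfst x + vfst y"
  and vfst_diff [simp]: "vfst (x - y) = vfst x - vfst y"
  and vfst_smult [simp]: "vfst (c *s x) = c *s vfst x"
  and vfst_zero [simp]: "vfst 0 = 0"
  and vsnd_add [simp]: "vsnd (x + y) = vsnd x + vsnd y"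
  and vsnd_diff [simp]: "vsnd (x - y) = vsnd x - vsnd y"
  and vsnd_smult [simp]: "vsnd (c *s x) = c *s vsnd x"
  and vsnd_zero [simp]: "vsnd 0 = 0"
  by (simp_all add: vfst_def vsnd_def vec_eq_iff)

lemma sum_UNIV_sum_type:
  "(\<Sum>i\<in>(UNIV::('n::finite + 'm::finite) set). f i) = (\<Sum>a\<in>UNIV. f (Inl a)) + (\<Sum>b\<in>UNIV. f (Inr b))"
  using sum.Plus[of "UNIV::'n set" "UNIV::'m set" f] by (simp add: comp_def UNIV_Plus_UNIV)

lemma vfst_block_mv: "vfst (block A B C D *v x) = A *v vfst x + B *v vsnd x"
  and vsnd_block_mv: "vsnd (block A B C D *v x) = C *v vfst x + D *v vsnd x"
  by (simp_all add: vfst_def vsnd_def block_def matrix_vector_mult_def vec_eq_iff sum_UNIV_sum_type)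

lemma cinner_block_vectors: "cinner x y = cinner (vfst x) (vfst y) + cinner (vsnd x) (vsnd y)"
  by (simp add: cinner_def vfst_def vsnd_def sum_UNIV_sum_type)

lemma qform_block_diag: "qform (block A 0 0 D) x = qform A (vfst x) + qform D (vsnd x)"
  by (simp add: qform_conv_cinner cinner_block_vectors[of x] vfst_block_mv vsnd_block_mv)

lemma block_add: "block A B C D + block A' B' C' D' = block (A + A') (B + B') (C + C') (D + D')"
  by (simp add: block_def vec_eq_iff split: sum.split)

lemma cadj_block: "cadj (block A B C D) = block (cadj A) (cadj C) (cadj B) (cadj D)"
  by (simp add: block_def cadj_def vec_eq_iff split: sum.split)

lemma hpd_block_diag:
  assumes "hpd A" "hpd D"
  shows "hpd (block A 0 0 D)"
proof -
  have "hermitian (block A 0 0 D)"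
    using assms by (simp add: hpd_def hermitian_def cadj_block)
  moreover have "Re (qform (block A 0 0 D) x) > 0" if "x \<noteq> 0" for x
  proof -
    have "vfst x \<noteq> 0 \<or> vsnd x \<noteq> 0"
      using that vec_eq_iff_vfst_vsnd[of x 0] by simp
    then have "Re (qform A (vfst x)) > 0 \<or> Re (qform D (vsnd x)) > 0"
      using hpd_Re_qform_pos[OF assms(1)] hpd_Re_qform_pos[OF assms(2)] by blast
    moreover have "Re (qform A (vfst x)) \<ge> 0" "Re (qform D (vsnd x)) \<ge> 0"
      using hpd_Re_qform_nonneg[OF assms(1)] hpd_Re_qform_nonneg[OF assms(2)] by auto
    ultimately show ?thesis
      unfolding qform_block_diag by auto
  qed
  ultimately show ?thesis
    by (simp add: hpd_def hermitian_Im_qform)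
qed

lemma invertible_block_diag:
  assumes "invertible A" "invertible D"
  shows "invertible (block A 0 0 D)"
proof (rule invertible_if_kernel_trivial)
  fix x assume x: "block A 0 0 D *v x = 0"
  have "A *v vfst x = 0" "D *v vsnd x = 0"
    using arg_cong[OF x, of vfst] arg_cong[OF x, of vsnd]
    by (simp_all add: vfst_block_mv vsnd_block_mv)
  then show "x = 0"
    using invertible_mv_eq_iff[OF assms(1), of _ 0] invertible_mv_eq_iff[OF assms(2), of _ 0]
      vec_eq_iff_vfst_vsnd[of x 0] by simp
qed

lemma matrix_inv_block_diag_mv:
  assumes "invertible A" "invertible D"
  shows "vfst (matrix_inv (block A 0 0 D) *v w) = matrix_inv A *v vfst w"
    and "vsnd (matrix_inv (block A 0 0 D) *v w) = matrix_inv D *v vsnd w"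
proof -
  let ?y = "matrix_inv (block A 0 0 D) *v w"
  have y: "block A 0 0 D *v ?y = w"
    by (rule matrix_inv_mv_cancel(1)[OF invertible_block_diag[OF assms]])
  have "A *v vfst ?y = vfst w" "D *v vsnd ?y = vsnd w"
    using arg_cong[OF y, of vfst] arg_cong[OF y, of vsnd]
    by (simp_all add: vfst_block_mv vsnd_block_mv)
  then show "vfst ?y = matrix_inv A *v vfst w" "vsnd ?y = matrix_inv D *v vsnd w"
    by (metis matrix_inv_mv_cancel(2) assms)+
qed

lemma block_uminus: "- block A B C D = block (- A) (- B) (- C) (- D)"
  by (simp add: block_def vec_eq_iff split: sum.split)

lemma hpsd_block_diag: "hpsd A \<Longrightarrow> hpsd D \<Longrightarrow> hpsd (block A 0 0 D)"
  by (simp add: hpsd_def hermitian_def cadj_block qform_block_diag)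

lemma hermitian_part_saddle_block:
  "block A (cadj B) (- B) D + cadj (block A (cadj B) (- B) D) = block (A + cadj A) 0 0 (D + cadj D)"
  by (simp add: cadj_block block_add cadj_uminus)

lemma pos_semidef_saddle_block:
  "pos_semidef A \<Longrightarrow> pos_semidef D \<Longrightarrow> pos_semidef (block A (cadj B) (- B) D)"
  by (simp add: pos_semidef_def hermitian_part_saddle_block hpsd_block_diag)

lemma skew_hermitian_saddle_block:
  "skew_hermitian A \<Longrightarrow> skew_hermitian D \<Longrightarrow> skew_hermitian (block A (cadj B) (- B) D)"
  by (simp add: skew_hermitian_def cadj_block block_uminus cadj_uminus)

section \<open>Eigenvectors in invariant subspaces\<close>

definition matrix_power :: "'a::semiring_1^'k^'k \<Rightarrow> nat \<Rightarrow> 'a^'k^'k" where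
  "matrix_power M k = ((**) M ^^ k) (mat 1)"

lemma matrix_power_0 [simp]: "matrix_power M 0 = mat 1"
  by (simp add: matrix_power_def)

lemma matrix_power_Suc: "matrix_power M (Suc k) = M ** matrix_power M k"
  by (simp add: matrix_power_def)

lemma matrix_power_Suc_mv: "matrix_power M (Suc k) *v v = M *v (matrix_power M k *v v)"
  by (simp add: matrix_power_Suc matrix_vector_mul_assoc)

lemma matrix_power_add: "matrix_power M (i + k) = matrix_power M i ** matrix_power M k"
  by (induction i) (simp_all add: matrix_power_Suc matrix_mul_assoc)

lemma matrix_power_Suc_right: "matrix_power M (Suc k) = matrix_power M k ** M"
  using matrix_power_add[of M k 1] by (simp add: matrix_power_Suc)

definition poly_mv :: "complex poly \<Rightarrow> complex^'k^'k \<Rightarrow> complex^'k \<Rightarrow> complex^'k" where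
  "poly_mv p M v = (\<Sum>j\<le>degree p. coeff p j *s (matrix_power M j *v v))"

lemma poly_mv_conv_sum:
  "degree p \<le> N \<Longrightarrow> poly_mv p M v = (\<Sum>j\<le>N. coeff p j *s (matrix_power M j *v v))"
  unfolding poly_mv_def by (rule sum.mono_neutral_left) (auto simp: coeff_eq_0)

lemma poly_mv_add: "poly_mv (p + q) M v = poly_mv p M v + poly_mv q M v"
proof -
  let ?N = "max (degree p) (degree q)"
  have "degree (p + q) \<le> ?N"
    by (rule degree_add_le) auto
  then show ?thesis
    by (simp add: poly_mv_conv_sum[of _ ?N] vector_sadd_rdistrib sum.distrib)
qed

lemma poly_mv_smult: "poly_mv (smult c p) M v = c *s poly_mv p M v"
  by (simp add: poly_mv_conv_sum[of _ "degree p"] vec.scale_sum_right vector_smult_assoc)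

lemma poly_mv_pCons_0: "poly_mv (pCons 0 p) M v = M *v poly_mv p M v"
proof -
  have "poly_mv (pCons 0 p) M v
      = (\<Sum>j\<le>Suc (degree p). coeff (pCons 0 p) j *s (matrix_power M j *v v))"
    by (rule poly_mv_conv_sum) (simp add: degree_pCons_le)
  also have "\<dots> = (\<Sum>j\<le>degree p. coeff p j *s (matrix_power M (Suc j) *v v))"
    by (subst sum.atMost_Suc_shift) simp
  also have "\<dots> = M *v poly_mv p M v"
    by (simp add: poly_mv_def vec.sum vector_scalar_commute matrix_power_Suc_mv)
  finally show ?thesis .
qed

lemma poly_mv_linear_factor:
  "poly_mv ([:- a, 1:] * p) M v = M *v poly_mv p M v - a *s poly_mv p M v"
proof -
  have "[:- a, 1:] * p = pCons 0 p + smult (- a) p"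
    by simp
  then show ?thesis
    by (simp only: poly_mv_add poly_mv_smult poly_mv_pCons_0) (simp add: vector_smult_lneg)
qed

lemma poly_mv_in_invariant_subspace:
  assumes U: "vec.subspace U" "\<And>x. x \<in> U \<Longrightarrow> M *v x \<in> U" and "v \<in> U"
  shows "poly_mv p M v \<in> U"
proof -
  have "matrix_power M j *v v \<in> U" for j
    by (induction j) (simp_all add: \<open>v \<in> U\<close> U(2) matrix_power_Suc_mv)
  then show ?thesis
    unfolding poly_mv_def by (intro vec.subspace_sum vec.subspace_scale U(1))
qed

lemma poly_mv_monom_diff:
  assumes "i < j" "matrix_power M i *v v = matrix_power M j *v v"
  shows "poly_mv (monom 1 j - monom 1 i) M v = 0"
proof -
  let ?f = "\<lambda>k. matrix_power M k *v v"
  have "degree (monom 1 j - monom (1::complex) i) \<le> j"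
    using assms(1) by (intro degree_diff_le) (auto simp: degree_monom_eq)
  then have "poly_mv (monom 1 j - monom 1 i) M v
      = (\<Sum>k\<le>j. coeff (monom 1 j - monom 1 i) k *s ?f k)"
    by (rule poly_mv_conv_sum)
  also have "\<dots> = (\<Sum>k\<le>j. (if k = j then ?f k else 0) - (if k = i then ?f k else 0))"
    by (intro sum.cong) (auto simp: coeff_monom vector_sub_rdistrib)
  also have "\<dots> = 0"
    using assms by (simp add: sum_subtractf)
  finally show ?thesis .
qed

lemma poly_mv_annihilator_exists: "\<exists>p. p \<noteq> 0 \<and> poly_mv p (M::complex^'k^'k) v = 0"
proof -
  define D where "D = CARD('k)"
  define f where "f j = matrix_power M j *v v" for j
  show ?thesis
  proof (cases "inj_on f {..D}")
    case False
    then obtain i j where "i < j" "f i = f j"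
      unfolding inj_on_def by (metis linorder_neqE_nat)
    moreover have "coeff (monom 1 j - monom 1 i) j = (1::complex)"
      using \<open>i < j\<close> by (simp add: coeff_monom)
    ultimately show ?thesis
      using poly_mv_monom_diff[of i j M v] by (metis f_def one_neq_zero coeff_0)
  next
    case True
    have "card (f ` {..D}) = Suc D"
      using True by (simp add: card_image)
    then have "vec.dependent (f ` {..D})"
      by (intro vec.dependent_biggerset_general)
        (metis D_def card_cart_basis vec.dim_subset_UNIV vec.dimension_def le_imp_less_Suc)
    then obtain u where u: "\<exists>x\<in>f ` {..D}. u x \<noteq> 0" "(\<Sum>x\<in>f ` {..D}. u x *s x) = 0"
      using vec.dependent_finite by blast
    define p where "p = Poly (map (\<lambda>j. u (f j)) [0..<Suc D])"
    have coeff_p: "coeff p j = (if j \<le> D then u (f j) else 0)" for j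
      by (simp add: p_def nth_default_def del: upt_Suc)
    have "p \<noteq> 0"
      using u(1) coeff_p by (metis atMost_iff imageE coeff_0)
    have "poly_mv p M v = (\<Sum>j\<le>D. u (f j) *s f j)"
      by (simp add: poly_mv_conv_sum[of _ D] degree_le coeff_p f_def)
    also have "\<dots> = 0"
      using u(2) by (simp add: sum.reindex[OF True])
    finally show ?thesis
      using \<open>p \<noteq> 0\<close> by blast
  qed
qed

lemma eigenvector_if_poly_mv_eq_0:
  assumes U: "vec.subspace U" "\<And>x. x \<in> U \<Longrightarrow> M *v x \<in> U" and v: "v \<in> U" "v \<noteq> 0"
  shows "p \<noteq> 0 \<Longrightarrow> poly_mv p M v = 0 \<Longrightarrow> \<exists>x\<in>U. x \<noteq> 0 \<and> (\<exists>l. M *v x = l *s x)"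
proof (induction "degree p" arbitrary: p rule: less_induct)
  case less
  show ?case
  proof (cases "degree p = 0")
    case True
    then have "poly_mv p M v = coeff p 0 *s v"
      by (simp add: poly_mv_def)
    moreover have "coeff p 0 \<noteq> 0"
      using True less.prems(1) by (metis leading_coeff_0_iff)
    ultimately show ?thesis
      using less.prems(2) v(2) by simp
  next
    case False
    then obtain a where "poly p a = 0"
      by (metis fundamental_theorem_of_algebra constant_degree)
    then obtain q where p: "p = [:- a, 1:] * q"
      by (metis dvdE poly_eq_0_iff_dvd)
    with less.prems(1) have "q \<noteq> 0"
      by auto
    then have "degree q < degree p"
      unfolding p by (subst degree_mult_eq) auto
    show ?thesis
    proof (cases "poly_mv q M v = 0")
      case True
      then show ?thesis
        using less.hyps[OF \<open>degree q < degree p\<close> \<open>q \<noteq> 0\<close>] by blast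
    next
      case False
      have "M *v poly_mv q M v - a *s poly_mv q M v = 0"
        using less.prems(2) unfolding p poly_mv_linear_factor .
      then have "M *v poly_mv q M v = a *s poly_mv q M v"
        by simp
      then show ?thesis
        using False poly_mv_in_invariant_subspace[OF U v(1)] by blast
    qed
  qed
qed

lemma invariant_subspace_has_eigenvector:
  fixes M :: "complex^'k^'k"
  assumes "vec.subspace U" "\<And>x. x \<in> U \<Longrightarrow> M *v x \<in> U" "v \<in> U" "v \<noteq> 0"
  shows "\<exists>x\<in>U. x \<noteq> 0 \<and> (\<exists>l. M *v x = l *s x)"
  using poly_mv_annihilator_exists[of M v] eigenvector_if_poly_mv_eq_0[OF assms] by blast

section \<open>Powers of a matrix that is nonexpansive in a Hermitian norm\<close>

lemma smult_of_real_eq_scaleR: "complex_of_real r *s (x::complex^'n) = r *\<^sub>R x"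
  by (simp add: vec_eq_iff scaleR_conv_of_real[where 'a=complex])

lemma tendsto_mv: "(f \<longlongrightarrow> x) F \<Longrightarrow> ((\<lambda>k. (M::complex^'n^'m) *v f k) \<longlongrightarrow> M *v x) F"
  by (rule bounded_linear.tendsto[OF matrix_vector_mul_bounded_linear])

lemma tendsto_qform: "(f \<longlongrightarrow> x) F \<Longrightarrow> ((\<lambda>k. qform M (f k)) \<longlongrightarrow> qform M x) F"
  unfolding qform_def by (intro tendsto_intros tendsto_vec_nth tendsto_mv)

lemma hpd_qform_lower_bound:
  fixes H :: "complex^'k^'k"
  assumes "hpd H"
  obtains \<kappa> where "\<kappa> > 0" "\<And>v. \<kappa> * (norm v)\<^sup>2 \<le> Re (qform H v)"
proof -
  let ?S = "sphere (0::complex^'k) 1"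
  have "continuous_on ?S (\<lambda>v. Re (qform H v))"
    unfolding continuous_on_def by (intro ballI tendsto_Re tendsto_qform tendsto_ident_at)
  moreover have "?S \<noteq> {}"
    by (simp add: sphere_eq_empty)
  ultimately obtain v0 where v0: "v0 \<in> ?S" "\<And>v. v \<in> ?S \<Longrightarrow> Re (qform H v0) \<le> Re (qform H v)"
    using continuous_attains_inf[OF compact_sphere] by blast
  have "v0 \<noteq> 0"
    using v0(1) by auto
  with assms have "Re (qform H v0) > 0"
    by (rule hpd_Re_qform_pos)
  moreover have "Re (qform H v0) * (norm v)\<^sup>2 \<le> Re (qform H v)" for v
  proof (cases "v = 0")
    case False
    define n where "n = norm v"
    define w where "w = (1 / n) *\<^sub>R v"
    have "w \<in> ?S"
      using False by (simp add: w_def n_def)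
    have "v = of_real n *s w"
      using False by (simp add: w_def n_def smult_of_real_eq_scaleR)
    then have "Re (qform H v) = n\<^sup>2 * Re (qform H w)"
      by (simp add: qform_smult)
    moreover have "Re (qform H v0) * n\<^sup>2 \<le> Re (qform H w) * n\<^sup>2"
      using v0(2)[OF \<open>w \<in> ?S\<close>] by (rule mult_right_mono) simp
    ultimately show ?thesis
      by (simp add: n_def mult.commute)
  qed simp
  ultimately show thesis
    using that by blast
qed

lemma decseq_tendsto_if_subseq_tendsto:
  fixes f :: "nat \<Rightarrow> real"
  assumes "decseq f" "strict_mono r" "(f \<circ> r) \<longlonglongrightarrow> L"
  shows "f \<longlonglongrightarrow> L"
proof -
  have "decseq (f \<circ> r)"
    using assms(1,2) by (simp add: decseq_def strict_mono_leD)
  then have "L \<le> f (r k)" for k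
    using decseq_ge[OF _ assms(3)] by simp
  moreover have "f (r k) \<le> f k" for k
    using assms(1) seq_suble[OF assms(2), of k] by (simp add: decseq_def)
  ultimately have "L \<le> f k" for k
    by (meson order.trans)
  then obtain L' where "f \<longlonglongrightarrow> L'"
    using decseq_convergent[OF assms(1)] by blast
  moreover have "L' = L"
    using LIMSEQ_subseq_LIMSEQ[OF \<open>f \<longlonglongrightarrow> L'\<close> assms(2)] assms(3) LIMSEQ_unique by blast
  ultimately show ?thesis
    by simp
qed

lemma matrix_power_mv_fixed: "G *v y = y \<Longrightarrow> matrix_power G k *v y = y"
  by (induction k) (simp_all add: matrix_power_Suc_mv)

locale hermitian_nonexpansive =
  fixes G H :: "complex^'k^'k"
  assumes H_hpd: "hpd H"
    and nonexpansive: "\<And>v. Re (qform H (G *v v)) \<le> Re (qform H v)"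
begin

definition energy :: "complex^'k \<Rightarrow> real" where
  "energy v = Re (qform H v)"

definition defect :: "complex^'k^'k" where
  "defect = H - cadj G ** H ** G"

lemma energy_pos: "v \<noteq> 0 \<Longrightarrow> energy v > 0"
  by (simp add: energy_def hpd_Re_qform_pos[OF H_hpd])

lemma energy_smult: "energy (c *s v) = (cmod c)\<^sup>2 * energy v"
  by (simp add: energy_def qform_smult)

lemma energy_matrix_power_le: "energy (matrix_power G k *v v) \<le> energy v"
  by (induction k) (auto simp: matrix_power_Suc_mv energy_def intro: order.trans[OF nonexpansive])

lemma tendsto_energy: "(f \<longlongrightarrow> x) F \<Longrightarrow> ((\<lambda>k. energy (f k)) \<longlongrightarrow> energy x) F"
  unfolding energy_def by (intro tendsto_Re tendsto_qform)

lemma norm_le_sqrt_energy: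
  obtains C where "C > 0" "\<And>v. norm v \<le> C * sqrt (energy v)"
proof -
  obtain \<kappa> where \<kappa>: "\<kappa> > 0" "\<And>v. \<kappa> * (norm v)\<^sup>2 \<le> energy v"
    using hpd_qform_lower_bound[OF H_hpd] unfolding energy_def by blast
  have "norm v \<le> 1 / sqrt \<kappa> * sqrt (energy v)" for v
  proof -
    have "(norm v)\<^sup>2 \<le> energy v / \<kappa>"
      using \<kappa> by (simp add: field_simps mult.commute)
    then have "norm v \<le> sqrt (energy v / \<kappa>)"
      by (rule real_le_rsqrt)
    then show ?thesis
      by (simp add: real_sqrt_divide)
  qed
  then show thesis
    using that[of "1 / sqrt \<kappa>"] \<kappa>(1) by simp
qed

lemma tendsto_zero_if_energy_tendsto_zero:
  assumes "(\<lambda>k. energy (f k)) \<longlonglongrightarrow> 0"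
  shows "f \<longlonglongrightarrow> 0"
proof -
  obtain C where C: "C > 0" "\<And>v. norm v \<le> C * sqrt (energy v)"
    using norm_le_sqrt_energy by blast
  have "(\<lambda>k. C * sqrt (energy (f k))) \<longlonglongrightarrow> C * sqrt 0"
    by (intro tendsto_mult tendsto_const tendsto_real_sqrt assms)
  moreover have "\<forall>\<^sub>F k in sequentially. norm (f k) \<le> C * sqrt (energy (f k))"
    using C(2) by (intro always_eventually allI)
  ultimately show ?thesis
    using Lim_null_comparison by force
qed

lemma energy_defect: "Re (qform defect v) = energy v - energy (G *v v)"
proof -
  have "qform (cadj G ** H ** G) v = qform H (G *v v)"
    using qform_congruence[of "cadj G" H v] by simp
  then show ?thesis
    by (simp add: defect_def energy_def qform_def matrix_vector_mult_diff_rdistrib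
        right_diff_distrib sum_subtractf)
qed

lemma defect_hpsd: "hpsd defect"
proof -
  have "cadj H = H"
    using H_hpd by (simp add: hpd_def hermitian_def)
  then have "hermitian defect"
    by (simp add: hermitian_def defect_def cadj_diff cadj_matrix_mult matrix_mul_assoc)
  then show ?thesis
    using nonexpansive by (simp add: hpsd_def hermitian_Im_qform energy_defect energy_def)
qed

lemma energy_preserved_iff: "energy (G *v v) = energy v \<longleftrightarrow> defect *v v = 0"
  using hpsd_mv_eq_0_if_qform_eq_0[OF defect_hpsd, of v] energy_defect[of v]
  by (auto simp: qform_conv_cinner)

(* The largest G-invariant subspace on which G is an isometry for the H-norm. *)
definition isometric_core :: "(complex^'k) set" where
  "isometric_core = {v. \<forall>i. defect *v (matrix_power G i *v v) = 0}"

lemma subspace_isometric_core: "vec.subspace isometric_core"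
  unfolding vec.subspace_def isometric_core_def
  by (simp add: matrix_vector_right_distrib vector_scalar_commute)

lemma isometric_core_invariant:
  assumes "v \<in> isometric_core"
  shows "G *v v \<in> isometric_core"
proof -
  have "matrix_power G i *v (G *v v) = matrix_power G (Suc i) *v v" for i
    by (simp add: matrix_power_Suc_right matrix_vector_mul_assoc)
  then show ?thesis
    using assms by (simp add: isometric_core_def)
qed

lemma energy_isometric_core:
  assumes "v \<in> isometric_core"
  shows "energy (G *v v) = energy v"
proof -
  have "defect *v (matrix_power G 0 *v v) = 0"
    using assms unfolding isometric_core_def by blast
  then show ?thesis
    by (simp add: energy_preserved_iff)
qed

lemma Jordan_chain_trivial:
  assumes "G *v x = x" "G *v w = w + x"
  shows "x = 0"
proof (rule ccontr)
  assume "x \<noteq> 0"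
  have orbit: "matrix_power G k *v w = w + of_nat k *s x" for k
  proof (induction k)
    case (Suc k)
    then have "matrix_power G (Suc k) *v w = G *v w + of_nat k *s (G *v x)"
      by (simp add: matrix_power_Suc_mv matrix_vector_right_distrib vector_scalar_commute)
    then show ?case
      using assms by (simp add: vector_sadd_rdistrib add.assoc)
  qed simp
  obtain C where C: "C > 0" "\<And>v. norm v \<le> C * sqrt (energy v)"
    using norm_le_sqrt_energy by blast
  define R where "R = C * sqrt (energy w) + norm w"
  have "norm x > 0"
    using \<open>x \<noteq> 0\<close> by simp
  then obtain k :: nat where "R < real k * norm x"
    using reals_Archimedean3 by blast
  moreover have "real k * norm x \<le> norm (w + of_nat k *s x) + norm w"
    using norm_triangle_ineq4[of "w + of_nat k *s x" w] smult_of_real_eq_scaleR[of "real k" x]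
    by simp
  moreover have "norm (w + of_nat k *s x) \<le> C * sqrt (energy w)"
  proof -
    have "norm (w + of_nat k *s x) \<le> C * sqrt (energy (matrix_power G k *v w))"
      using C(2) orbit[of k] by metis
    also have "\<dots> \<le> C * sqrt (energy w)"
      using C(1) energy_matrix_power_le[of k w] by simp
    finally show ?thesis .
  qed
  ultimately show False
    unfolding R_def by linarith
qed

lemma isometric_core_fixed:
  assumes unimodular: "\<And>x l. x \<noteq> 0 \<Longrightarrow> G *v x = l *s x \<Longrightarrow> cmod l = 1 \<Longrightarrow> l = 1"
    and v: "v \<in> isometric_core"
  shows "G *v v = v"
proof (rule ccontr)
  assume "G *v v \<noteq> v"
  \<comment> \<open>An eigenvector of \<open>G\<close> in the image of the core under \<open>G - I\<close> has a unimodular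
    eigenvalue, hence eigenvalue 1, and so starts a Jordan chain.\<close>
  let ?W = "(*v) (G - mat 1) ` isometric_core"
  have "vec.subspace ?W"
    by (rule vec.subspace_image[OF subspace_isometric_core])
  moreover have "G *v y \<in> ?W" if "y \<in> ?W" for y
  proof -
    obtain u where "u \<in> isometric_core" "y = (G - mat 1) *v u"
      using \<open>y \<in> ?W\<close> by blast
    then have "G *v y = (G - mat 1) *v (G *v u)" and "G *v u \<in> isometric_core"
      by (simp_all add: isometric_core_invariant matrix_vector_mult_diff_distrib
          matrix_vector_mult_diff_rdistrib)
    then show ?thesis
      by blast
  qed
  moreover have "(G - mat 1) *v v \<in> ?W" and "(G - mat 1) *v v \<noteq> 0"
    using v \<open>G *v v \<noteq> v\<close> by (simp_all add: matrix_vector_mult_diff_rdistrib)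
  ultimately obtain x l where x: "x \<in> ?W" "x \<noteq> 0" "G *v x = l *s x"
    using invariant_subspace_has_eigenvector by blast
  then obtain w where w: "w \<in> isometric_core" "x = G *v w - w"
    by (auto simp: matrix_vector_mult_diff_rdistrib)
  then have "x \<in> isometric_core"
    using vec.subspace_diff[OF subspace_isometric_core isometric_core_invariant] by simp
  then have "(cmod l)\<^sup>2 * energy x = energy x"
    using energy_isometric_core[of x] x(3) by (simp add: energy_smult)
  then have "cmod l = 1"
    using energy_pos[OF x(2)] norm_ge_zero[of l] by (simp add: power2_eq_1_iff)
  then have "l = 1"
    using unimodular x(2,3) by blast
  then have "G *v x = x"
    using x(3) by simp
  moreover have "G *v w = w + x"
    using w(2) by simp
  ultimately show False
    using Jordan_chain_trivial x(2) by blast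
qed

lemma energy_orbit_decseq: "decseq (\<lambda>k. energy (matrix_power G k *v v))"
  by (intro decseq_SucI) (simp add: matrix_power_Suc_mv nonexpansive energy_def)

lemma orbit_convergent_subseq:
  obtains y r where "strict_mono r" "(\<lambda>j. matrix_power G (r j) *v e) \<longlonglongrightarrow> y"
proof -
  obtain C where C: "C > 0" "\<And>v. norm v \<le> C * sqrt (energy v)"
    using norm_le_sqrt_energy by blast
  have "\<forall>k. matrix_power G k *v e \<in> cball 0 (C * sqrt (energy e))"
  proof
    fix k
    have "norm (matrix_power G k *v e) \<le> C * sqrt (energy (matrix_power G k *v e))"
      by (rule C(2))
    also have "\<dots> \<le> C * sqrt (energy e)"
      using C(1) energy_matrix_power_le[of k e] by simp
    finally show "matrix_power G k *v e \<in> cball 0 (C * sqrt (energy e))"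
      by simp
  qed
  then obtain y r where "strict_mono r" "((\<lambda>k. matrix_power G k *v e) \<circ> r) \<longlonglongrightarrow> y"
    using compact_cball[of 0 "C * sqrt (energy e)", unfolded compact_def, rule_format,
        of "\<lambda>k. matrix_power G k *v e"] by auto
  with that show thesis
    by (simp add: comp_def)
qed

lemma orbit_cluster_point_in_isometric_core:
  assumes r: "strict_mono r" "(\<lambda>j. matrix_power G (r j) *v e) \<longlonglongrightarrow> y"
  shows "y \<in> isometric_core"
proof -
  have "(\<lambda>k. energy (matrix_power G k *v e)) \<longlonglongrightarrow> energy y"
    using decseq_tendsto_if_subseq_tendsto[OF energy_orbit_decseq r(1)] tendsto_energy[OF r(2)]
    by (simp add: comp_def)
  then have "(\<lambda>j. energy (matrix_power G (i + r j) *v e)) \<longlonglongrightarrow> energy y" for i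
    using LIMSEQ_subseq_LIMSEQ[of _ _ "\<lambda>j. i + r j"] r(1) by (simp add: strict_mono_def comp_def)
  moreover have "(\<lambda>j. energy (matrix_power G (i + r j) *v e)) \<longlonglongrightarrow> energy (matrix_power G i *v y)"
    for i
    using tendsto_energy[OF tendsto_mv[OF r(2)], of "matrix_power G i"]
    by (simp add: matrix_power_add matrix_vector_mul_assoc)
  ultimately have "energy (matrix_power G i *v y) = energy y" for i
    using LIMSEQ_unique by blast
  then have "energy (G *v (matrix_power G i *v y)) = energy (matrix_power G i *v y)" for i
    by (metis matrix_power_Suc_mv)
  then show ?thesis
    by (simp add: isometric_core_def energy_preserved_iff)
qed

lemma orbit_tendsto_if_fixed_cluster_point:
  assumes "G *v y = y" and r: "strict_mono r" "(\<lambda>j. matrix_power G (r j) *v e) \<longlonglongrightarrow> y"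
  shows "(\<lambda>k. matrix_power G k *v e) \<longlonglongrightarrow> y"
proof -
  have "matrix_power G k *v e - y = matrix_power G k *v (e - y)" for k
    using matrix_power_mv_fixed[OF assms(1)] by (simp add: matrix_vector_mult_diff_distrib)
  moreover have "((\<lambda>k. energy (matrix_power G k *v e - y)) \<circ> r) \<longlonglongrightarrow> 0"
    using tendsto_energy[OF LIM_zero[OF r(2)]] by (simp add: comp_def energy_def)
  ultimately have "(\<lambda>k. energy (matrix_power G k *v e - y)) \<longlonglongrightarrow> 0"
    using decseq_tendsto_if_subseq_tendsto[OF energy_orbit_decseq[of "e - y"] r(1)] by simp
  then show ?thesis
    by (rule LIM_zero_cancel[OF tendsto_zero_if_energy_tendsto_zero])
qed

theorem matrix_power_tendsto_fixed_point:
  assumes unimodular: "\<And>x l. x \<noteq> 0 \<Longrightarrow> G *v x = l *s x \<Longrightarrow> cmod l = 1 \<Longrightarrow> l = 1"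
  shows "\<exists>y. G *v y = y \<and> (\<lambda>k. matrix_power G k *v e) \<longlonglongrightarrow> y"
proof -
  obtain y r where r: "strict_mono r" "(\<lambda>j. matrix_power G (r j) *v e) \<longlonglongrightarrow> y"
    by (rule orbit_convergent_subseq)
  then have "y \<in> isometric_core"
    by (rule orbit_cluster_point_in_isometric_core)
  then have "G *v y = y"
    by (rule isometric_core_fixed[rotated]) (rule unimodular)
  then show ?thesis
    using orbit_tendsto_if_fixed_cluster_point r by blast
qed

end

section \<open>The EPSS iteration for a general splitting\<close>

lemma qform_inv_add_diff:
  fixes Sg K :: "complex^'k^'k"
  assumes herm: "hermitian Sg" and inv: "invertible Sg"
  shows "qform (matrix_inv Sg) ((Sg + K) *v w)
    = qform (matrix_inv Sg) ((Sg - K) *v w) + 2 * qform (K + cadj K) w"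
proof -
  have cancel: "cinner (Sg *v w) (matrix_inv Sg *v y) = cinner w y" for y
    using hermitian_cinner[OF herm, of w "matrix_inv Sg *v y"]
    by (simp add: matrix_inv_mv_cancel[OF inv])
  have "cinner (K *v w) w = cinner w (cadj K *v w)"
    by (rule cinner_adjoint)
  then show ?thesis
    by (simp add: qform_conv_cinner matrix_vector_mult_add_rdistrib matrix_vector_mult_diff_rdistrib
        matrix_vector_right_distrib matrix_vector_mult_diff_distrib cinner_simps cancel
        matrix_inv_mv_cancel[OF inv] hermitian_cinner[OF herm])
qed

locale epss_splitting =
  fixes Sg P S :: "complex^'k^'k"
  assumes Sg_hpd: "hpd Sg" and P_psd: "pos_semidef P" and S_skew: "skew_hermitian S"
begin

definition iteration_matrix :: "complex^'k^'k" where
  "iteration_matrix = matrix_inv (Sg + S) ** (Sg - P) ** matrix_inv (Sg + P) ** (Sg - S)"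

definition half_step :: "complex^'k \<Rightarrow> complex^'k" where
  "half_step v = matrix_inv (Sg + P) *v ((Sg - S) *v v)"

definition weight :: "complex^'k^'k" where
  "weight = cadj (Sg + S) ** matrix_inv Sg ** (Sg + S)"

lemma invertible_Sg_add_P: "invertible (Sg + P)"
  using invertible_hpd_add_pos_semidef[OF Sg_hpd P_psd] .

lemma invertible_Sg_add_S: "invertible (Sg + S)"
  using invertible_hpd_add_pos_semidef[OF Sg_hpd skew_hermitian_pos_semidef[OF S_skew]] .

lemma invertible_Sg_diff_S: "invertible (Sg - S)"
  using invertible_hpd_add_pos_semidef[OF Sg_hpd
      skew_hermitian_pos_semidef[OF skew_hermitian_uminus[OF S_skew]]] by simp

lemma half_step_eq: "(Sg + P) *v half_step v = (Sg - S) *v v"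
  by (simp add: half_step_def matrix_inv_mv_cancel[OF invertible_Sg_add_P])

lemma iteration_matrix_eq: "(Sg + S) *v (iteration_matrix *v v) = (Sg - P) *v half_step v"
  by (simp add: iteration_matrix_def half_step_def matrix_vector_mul_assoc[symmetric]
      matrix_inv_mv_cancel[OF invertible_Sg_add_S])

lemma qform_weight: "qform weight v = qform (matrix_inv Sg) ((Sg + S) *v v)"
  using qform_congruence[of "cadj (Sg + S)" "matrix_inv Sg" v] by (simp add: weight_def)

lemma weight_hpd: "hpd weight"
proof -
  have Sg_inv: "hpd (matrix_inv Sg)"
    by (rule hpd_matrix_inv[OF Sg_hpd])
  then have "hermitian weight"
    by (simp add: hpd_def hermitian_def weight_def cadj_matrix_mult matrix_mul_assoc)
  moreover have "Re (qform weight v) > 0" if "v \<noteq> 0" for v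
  proof -
    have "(Sg + S) *v v \<noteq> 0"
      using that invertible_mv_eq_iff[OF invertible_Sg_add_S, of v 0] by simp
    then show ?thesis
      using Sg_inv by (simp add: qform_weight hpd_Re_qform_pos)
  qed
  ultimately show ?thesis
    by (simp add: hpd_def hermitian_Im_qform)
qed

lemma weight_energy_identity:
  "qform weight v = qform weight (iteration_matrix *v v) + 2 * qform (P + cadj P) (half_step v)"
proof -
  have herm: "hermitian Sg" and inv: "invertible Sg"
    using Sg_hpd hpd_invertible by (auto simp: hpd_def)
  have "qform (S + cadj S) v = 0"
    using S_skew by (simp add: skew_hermitian_def qform_def)
  then have "qform weight v = qform (matrix_inv Sg) ((Sg - S) *v v)"
    using qform_inv_add_diff[OF herm inv, of S v] by (simp add: qform_weight)
  also have "\<dots> = qform (matrix_inv Sg) ((Sg + P) *v half_step v)"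
    by (simp add: half_step_eq)
  also have "\<dots> = qform weight (iteration_matrix *v v) + 2 * qform (P + cadj P) (half_step v)"
    by (simp add: qform_inv_add_diff[OF herm inv] qform_weight iteration_matrix_eq)
  finally show ?thesis .
qed

lemma iteration_matrix_nonexpansive:
  "Re (qform weight (iteration_matrix *v v)) \<le> Re (qform weight v)"
  using weight_energy_identity[of v] P_psd by (simp add: pos_semidef_def hpsd_def)

sublocale hermitian_nonexpansive iteration_matrix weight
  by unfold_locales (simp_all add: weight_hpd iteration_matrix_nonexpansive)

lemma unimodular_eigenvector_half_step:
  assumes "iteration_matrix *v x = l *s x" "cmod l = 1"
  shows "(P + cadj P) *v half_step x = 0"
proof -
  have "energy (iteration_matrix *v x) = energy x"
    using assms by (simp add: energy_smult)
  then have "Re (qform (P + cadj P) (half_step x)) = 0"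
    using weight_energy_identity[of x] by (simp add: energy_def)
  then show ?thesis
    using P_psd hpsd_mv_eq_0_if_qform_eq_0 by (simp add: pos_semidef_def)
qed

lemma eigenvector_half_step:
  assumes "iteration_matrix *v x = l *s x" "l * m = 1"
  defines "z \<equiv> half_step x"
  shows "2 *s (Sg *v x) = (1 + m) *s (Sg *v z) + (1 - m) *s (P *v z)"
    and "2 *s (S *v x) = (m - 1) *s (Sg *v z) - (1 + m) *s (P *v z)"
proof -
  have e1: "Sg *v z + P *v z = Sg *v x - S *v x"
    using half_step_eq[of x]
    by (simp add: z_def matrix_vector_mult_add_rdistrib matrix_vector_mult_diff_rdistrib)
  have e2: "l *s (Sg *v x + S *v x) = Sg *v z - P *v z"
    using iteration_matrix_eq[of x] assms(1)
    by (simp add: z_def matrix_vector_mult_add_rdistrib matrix_vector_mult_diff_rdistrib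
        vector_scalar_commute vector_add_ldistrib)
  have "2 * (Sg *v x) $ i = (1 + m) * (Sg *v z) $ i + (1 - m) * (P *v z) $ i
      \<and> 2 * (S *v x) $ i = (m - 1) * (Sg *v z) $ i - (1 + m) * (P *v z) $ i" for i
  proof -
    have "(Sg *v z) $ i + (P *v z) $ i = (Sg *v x) $ i - (S *v x) $ i"
      and "l * (Sg *v x) $ i + l * (S *v x) $ i = (Sg *v z) $ i - (P *v z) $ i"
      using arg_cong[OF e1, of "\<lambda>v. v $ i"] arg_cong[OF e2, of "\<lambda>v. v $ i"] by simp_all
    with assms(2) show ?thesis
      by algebra
  qed
  then show "2 *s (Sg *v x) = (1 + m) *s (Sg *v z) + (1 - m) *s (P *v z)"
    and "2 *s (S *v x) = (m - 1) *s (Sg *v z) - (1 + m) *s (P *v z)"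
    by (simp_all add: vec_eq_iff algebra_simps)
qed

lemma fixed_point_in_kernel:
  assumes "iteration_matrix *v y = y"
  shows "(P + S) *v y = 0"
proof -
  define z where "z = half_step y"
  have fixed: "iteration_matrix *v y = 1 *s y"
    using assms by simp
  have "2 *s (Sg *v y) = 2 *s (Sg *v z)"
    using eigenvector_half_step(1)[OF fixed, of 1] by (simp add: z_def)
  then have "y = z"
    using invertible_mv_eq_iff[OF hpd_invertible[OF Sg_hpd]] vec.scale_left_imp_eq by simp
  moreover have "2 *s (S *v y) = - (2 *s (P *v z))"
    using eigenvector_half_step(2)[OF fixed, of 1] by (simp add: z_def)
  ultimately have "2 *s (S *v y) = - (2 *s (P *v y))"
    by simp
  then show ?thesis
    by (simp add: vec_eq_iff matrix_vector_mult_add_rdistrib)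
qed

lemma eigenvector_relation:
  assumes "iteration_matrix *v x = l *s x" "l * m = 1"
  defines "z \<equiv> half_step x"
  shows "(1 + m) *s ((P + S) *v z) + (1 - m) *s ((Sg + S ** matrix_inv Sg ** P) *v z) = 0"
proof -
  have inv: "invertible Sg"
    by (rule hpd_invertible[OF Sg_hpd])
  have "2 *s x = (1 + m) *s z + (1 - m) *s (matrix_inv Sg *v (P *v z))"
    using arg_cong[OF eigenvector_half_step(1)[OF assms(1,2)], of "(*v) (matrix_inv Sg)"]
    by (simp add: z_def vector_scalar_commute matrix_vector_right_distrib
        matrix_vector_mult_diff_distrib matrix_inv_mv_cancel[OF inv])
  then have "2 *s (S *v x) = (1 + m) *s (S *v z) + (1 - m) *s (S *v (matrix_inv Sg *v (P *v z)))"
    by (metis vector_scalar_commute matrix_vector_right_distrib)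
  then have "(m - 1) *s (Sg *v z) - (1 + m) *s (P *v z)
      = (1 + m) *s (S *v z) + (1 - m) *s (S *v (matrix_inv Sg *v (P *v z)))"
    using eigenvector_half_step(2)[OF assms(1,2)] by (simp add: z_def)
  moreover have "(1 + m) *s ((P + S) *v z) + (1 - m) *s ((Sg + S ** matrix_inv Sg ** P) *v z)
      = (1 + m) *s (S *v z) + (1 - m) *s (S *v (matrix_inv Sg *v (P *v z)))
        - ((m - 1) *s (Sg *v z) - (1 + m) *s (P *v z))"
    by (simp add: matrix_vector_mult_add_rdistrib matrix_vector_mul_assoc[symmetric]
        algebra_simps vector_sadd_rdistrib vector_sub_rdistrib vector_add_ldistrib
        vector_ssub_ldistrib)
  ultimately show ?thesis
    by simp
qed

lemma iteration_fixed_point: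
  assumes "(P + S) *v u = b"
  shows "iteration_matrix *v u + 2 *s (matrix_inv (Sg + S) ** Sg ** matrix_inv (Sg + P) *v b) = u"
proof -
  define w where "w = matrix_inv (Sg + P) *v b"
  have "(Sg + P) *v half_step u = (Sg - S) *v u"
    by (rule half_step_eq)
  also have "\<dots> = (Sg + P) *v u - b"
    unfolding assms[symmetric]
    by (simp add: matrix_vector_mult_add_rdistrib matrix_vector_mult_diff_rdistrib)
  also have "\<dots> = (Sg + P) *v (u - w)"
    by (simp add: w_def matrix_vector_mult_diff_distrib
        matrix_inv_mv_cancel[OF invertible_Sg_add_P])
  finally have "half_step u = u - w"
    using invertible_mv_eq_iff[OF invertible_Sg_add_P] by blast
  then have "(Sg + S) *v (iteration_matrix *v u + 2 *s (matrix_inv (Sg + S) ** Sg *v w))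
      = (Sg - P) *v (u - w) + 2 *s (Sg *v w)"
    by (simp add: iteration_matrix_eq matrix_vector_right_distrib vector_scalar_commute
        matrix_vector_mul_assoc[symmetric] matrix_inv_mv_cancel[OF invertible_Sg_add_S])
  also have "\<dots> = (Sg - P) *v u + (Sg + P) *v w"
  proof -
    have "2 *s (Sg *v w) = (Sg - P) *v w + (Sg + P) *v w"
      by (simp add: vec_eq_iff matrix_vector_mult_add_rdistrib matrix_vector_mult_diff_rdistrib)
    then show ?thesis
      by (simp add: matrix_vector_mult_diff_distrib)
  qed
  also have "\<dots> = (Sg + S) *v u"
    unfolding w_def matrix_inv_mv_cancel[OF invertible_Sg_add_P] assms[symmetric]
    by (simp add: matrix_vector_mult_add_rdistrib matrix_vector_mult_diff_rdistrib)
  finally show ?thesis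
    using invertible_mv_eq_iff[OF invertible_Sg_add_S] by (simp add: w_def matrix_vector_mul_assoc)
qed

end

section \<open>Saddle point blocks and the conditions on the null space of \<open>C + C\<^sup>*\<close>\<close>

lemma Re_qform_schur_pos:
  assumes "hpd Pb" "r \<noteq> 0"
  shows "Re (qform (Pb + K ** matrix_inv Pb ** cadj K) r) > 0"
proof -
  have "Re (qform (K ** matrix_inv Pb ** cadj K) r) \<ge> 0"
    using hpd_Re_qform_nonneg[OF hpd_matrix_inv[OF assms(1)]] by (simp add: qform_congruence)
  then show ?thesis
    using hpd_Re_qform_pos[OF assms] by (simp add: qform_add)
qed

lemma qform_mixed_eq_0:
  assumes "cadj K *v r = 0 \<or> cadj L *v r = 0"
  shows "qform (K ** M ** cadj L) r = 0"
proof -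
  have "qform (K ** M ** cadj L) r = cinner (cadj K *v r) (M *v (cadj L *v r))"
    using cinner_adjoint[of "cadj K" r]
    by (simp add: qform_conv_cinner matrix_vector_mul_assoc[symmetric])
  then show ?thesis
    using assms by auto
qed

locale epss_blocks =
  fixes AP AS Pa :: "complex^'n^'n"
    and C CP CS Pb :: "complex^'m^'m"
    and BP BS :: "complex^'n^'m"
  assumes AP_pd: "pos_def AP" and AS_skew: "skew_hermitian AS"
    and C_split: "C = CP + CS" and CP_psd: "pos_semidef CP" and CS_skew: "skew_hermitian CS"
    and Pa_hpd: "hpd Pa" and Pb_hpd: "hpd Pb"
begin

sublocale epss_splitting "block Pa 0 0 Pb" "block AP (cadj BP) (- BP) CP"
  "block AS (cadj BS) (- BS) CS"
proof
  show "hpd (block Pa 0 0 Pb)"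
    by (rule hpd_block_diag[OF Pa_hpd Pb_hpd])
  have "pos_semidef AP"
    using AP_pd by (simp add: pos_def_def pos_semidef_def hpd_imp_hpsd)
  then show "pos_semidef (block AP (cadj BP) (- BP) CP)"
    by (rule pos_semidef_saddle_block[OF _ CP_psd])
  show "skew_hermitian (block AS (cadj BS) (- BS) CS)"
    by (rule skew_hermitian_saddle_block[OF AS_skew CS_skew])
qed

lemma hermitian_part_C: "C + cadj C = CP + cadj CP"
  using CS_skew by (simp add: C_split cadj_add skew_hermitian_def)

lemma unimodular_eigenvector_half_step_block:
  assumes "x \<noteq> 0" "iteration_matrix *v x = l *s x" "cmod l = 1"
  shows "vfst (half_step x) = 0" and "(C + cadj C) *v vsnd (half_step x) = 0"
    and "vsnd (half_step x) \<noteq> 0"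
proof -
  define z where "z = half_step x"
  have blk: "block (AP + cadj AP) 0 0 (C + cadj C) *v z = 0"
    using unimodular_eigenvector_half_step[OF assms(2,3)]
    by (simp add: z_def hermitian_part_saddle_block hermitian_part_C)
  have AP_z: "(AP + cadj AP) *v vfst z = 0"
    using arg_cong[OF blk, of vfst] by (simp add: vfst_block_mv)
  have C_z: "(C + cadj C) *v vsnd z = 0"
    using arg_cong[OF blk, of vsnd] by (simp add: vsnd_block_mv)
  have "vfst z = 0"
    using AP_pd AP_z by (auto simp: pos_def_def hpd_def qform_conv_cinner)
  moreover have "z \<noteq> 0"
    using half_step_eq[of x] assms(1) invertible_mv_eq_iff[OF invertible_Sg_diff_S, of x 0]
    by (auto simp: z_def)
  ultimately show "vfst (half_step x) = 0" and "vsnd (half_step x) \<noteq> 0"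
    using vec_eq_iff_vfst_vsnd[of z 0] by (simp_all add: z_def)
  show "(C + cadj C) *v vsnd (half_step x) = 0"
    using C_z by (simp add: z_def)
qed

lemma CP_mv_eq_if_C_mv_eq_0:
  assumes "C *v r = 0"
  shows "CP *v r = cadj CS *v r"
proof -
  have "cadj CS *v r = - (CS *v r)"
    using CS_skew by (simp add: skew_hermitian_def matrix_vector_mult_uminus_left)
  moreover have "CP *v r = - (CS *v r)"
    using assms by (simp add: C_split matrix_vector_mult_add_rdistrib eq_neg_iff_add_eq_0)
  ultimately show ?thesis
    by simp
qed

lemma eigenvector_relation_block:
  assumes ev: "iteration_matrix *v x = l *s x" and l: "cmod l = 1" "l \<noteq> 1"
    and z1: "vfst (half_step x) = 0" and Cr: "C *v vsnd (half_step x) = 0"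
  defines "r \<equiv> vsnd (half_step x)"
  shows "(Pb + CS ** matrix_inv Pb ** cadj CS) *v r = (BS ** matrix_inv Pa ** cadj BP) *v r"
proof -
  let ?Sg = "block Pa 0 0 Pb" and ?P = "block AP (cadj BP) (- BP) CP"
    and ?S = "block AS (cadj BS) (- BS) CS"
  define z where "z = half_step x"
  define m where "m = cnj l"
  have "l * m = 1"
    using l(1) complex_norm_square[of l] by (simp add: m_def)
  have "1 - m \<noteq> 0"
    using l(2) by (simp add: m_def complex_cnj_one_iff)
  define y where "y = matrix_inv ?Sg *v (?P *v z)"
  have y1: "vfst y = matrix_inv Pa *v (cadj BP *v r)"
    and y2: "vsnd y = matrix_inv Pb *v (CP *v r)"
    using matrix_inv_block_diag_mv[OF hpd_invertible[OF Pa_hpd] hpd_invertible[OF Pb_hpd]] z1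
    by (simp_all add: y_def vfst_block_mv vsnd_block_mv z_def r_def)
  have "vsnd ((?P + ?S) *v z) = 0"
    using z1 Cr by (simp add: matrix_vector_mult_add_rdistrib vsnd_block_mv C_split z_def)
  moreover have "vsnd ((?Sg + ?S ** matrix_inv ?Sg ** ?P) *v z)
      = Pb *v r - BS *v vfst y + CS *v vsnd y"
    by (simp add: matrix_vector_mult_add_rdistrib matrix_vector_mul_assoc[symmetric] y_def
        vsnd_block_mv z_def r_def matrix_vector_mult_uminus_left)
  moreover have "(1 + m) *s vsnd ((?P + ?S) *v z)
      + (1 - m) *s vsnd ((?Sg + ?S ** matrix_inv ?Sg ** ?P) *v z) = 0"
    using arg_cong[OF eigenvector_relation[OF ev \<open>l * m = 1\<close>], of vsnd] by (simp add: z_def)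
  ultimately have "(1 - m) *s (Pb *v r - BS *v vfst y + CS *v vsnd y) = 0"
    by (simp only: vector_smult_rzero add_0)
  then have "Pb *v r + CS *v vsnd y - BS *v vfst y = 0"
    using \<open>1 - m \<noteq> 0\<close> vec.scale_eq_0_iff by (metis diff_add_eq)
  then show ?thesis
    using CP_mv_eq_if_C_mv_eq_0[OF Cr]
    by (simp add: y1 y2 r_def matrix_vector_mult_add_rdistrib matrix_vector_mul_assoc
        matrix_mul_assoc)
qed

lemma unimodular_eigenvalue_eq_1:
  assumes null_incl: "nullsp (C + cadj C) \<subseteq> nullsp C"
    and separated: "\<And>r. r \<in> nullsp (C + cadj C) \<Longrightarrow> r \<noteq> 0 \<Longrightarrow>
      (Pb + CS ** matrix_inv Pb ** cadj CS) *v r \<noteq> (BS ** matrix_inv Pa ** cadj BP) *v r"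
    and x: "x \<noteq> 0" "iteration_matrix *v x = l *s x" "cmod l = 1"
  shows "l = 1"
proof (rule ccontr)
  assume "l \<noteq> 1"
  have "vsnd (half_step x) \<in> nullsp (C + cadj C)"
    using unimodular_eigenvector_half_step_block(2)[OF x] by (simp add: nullsp_def)
  moreover from this have "C *v vsnd (half_step x) = 0"
    using null_incl by (auto simp: nullsp_def)
  ultimately show False
    using separated unimodular_eigenvector_half_step_block[OF x]
      eigenvector_relation_block[OF x(2,3) \<open>l \<noteq> 1\<close>] by blast
qed

end

lemma conditions_imp_separated:
  fixes Pa BP BS Pb C CS r
  assumes Pb_hpd: "hpd Pb"
    and conds:
      "(\<forall>r\<in>nullsp (C + cadj C). r \<noteq> 0 \<longrightarrow>
          qform (Pb + CS ** matrix_inv Pb ** cadj CS) r \<noteq> qform (BS ** matrix_inv Pa ** cadj BP) r)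
     \<or> (\<forall>r\<in>nullsp (C + cadj C). r \<noteq> 0 \<longrightarrow>
          Im (qform (BS ** matrix_inv Pa ** cadj BP) r) = 0
          \<and> Re (qform (BS ** matrix_inv Pa ** cadj BP) r) \<le> 0)
     \<or> nullsp (C + cadj C) \<subseteq> nullsp (cadj BS) \<union> nullsp (cadj BP)
     \<or> (pos_def C \<or> BS = 0 \<or> BP = 0)"
    and r: "r \<in> nullsp (C + cadj C)" "r \<noteq> 0"
  shows "(Pb + CS ** matrix_inv Pb ** cadj CS) *v r \<noteq> (BS ** matrix_inv Pa ** cadj BP) *v r"
proof
  assume "(Pb + CS ** matrix_inv Pb ** cadj CS) *v r = (BS ** matrix_inv Pa ** cadj BP) *v r"
  then have same:
    "qform (Pb + CS ** matrix_inv Pb ** cadj CS) r = qform (BS ** matrix_inv Pa ** cadj BP) r"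
    by (simp add: qform_conv_cinner)
  then have pos: "Re (qform (BS ** matrix_inv Pa ** cadj BP) r) > 0"
    using Re_qform_schur_pos[OF Pb_hpd r(2), where K = CS] by simp
  have not_mixed: "\<not> (cadj BS *v r = 0 \<or> cadj BP *v r = 0)"
    using qform_mixed_eq_0[of BS r BP "matrix_inv Pa"] pos by auto
  from conds show False
  proof (elim disjE)
    assume "\<forall>r\<in>nullsp (C + cadj C). r \<noteq> 0 \<longrightarrow>
      qform (Pb + CS ** matrix_inv Pb ** cadj CS) r \<noteq> qform (BS ** matrix_inv Pa ** cadj BP) r"
    then show False
      using r same by blast
  next
    assume "\<forall>r\<in>nullsp (C + cadj C). r \<noteq> 0 \<longrightarrow>
      Im (qform (BS ** matrix_inv Pa ** cadj BP) r) = 0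
      \<and> Re (qform (BS ** matrix_inv Pa ** cadj BP) r) \<le> 0"
    then show False
      using r pos by force
  next
    assume "nullsp (C + cadj C) \<subseteq> nullsp (cadj BS) \<union> nullsp (cadj BP)"
    then show False
      using r(1) not_mixed by (auto simp: nullsp_def)
  next
    assume "pos_def C"
    then have "Re (qform (C + cadj C) r) > 0"
      using r(2) by (simp add: pos_def_def hpd_def)
    then show False
      using r(1) by (simp add: nullsp_def qform_conv_cinner)
  next
    assume "BS = 0"
    then show False
      using not_mixed by simp
  next
    assume "BP = 0"
    then show False
      using not_mixed by simp
  qed
qed

lemma semi_convergent_if_powers_converge:
  fixes G M :: "complex^'k^'k"
  assumes sol: "M *v u = b" and fixed: "G *v u + c = u"
    and kernel: "\<And>y. G *v y = y \<Longrightarrow> M *v y = 0"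
    and powers: "\<And>e. \<exists>y. G *v y = y \<and> (\<lambda>k. matrix_power G k *v e) \<longlonglongrightarrow> y"
  shows "semi_convergent G c M b"
  unfolding semi_convergent_def
proof
  fix u0
  have iterate: "((\<lambda>v. G *v v + c) ^^ k) u0 = u + matrix_power G k *v (u0 - u)" for k
  proof (induction k)
    case (Suc k)
    have "G *v (u + matrix_power G k *v (u0 - u)) + c
        = (G *v u + c) + matrix_power G (Suc k) *v (u0 - u)"
      by (simp add: matrix_vector_right_distrib matrix_power_Suc_mv algebra_simps)
    with Suc show ?case
      by (simp add: fixed)
  qed simp
  obtain y where y: "G *v y = y" "(\<lambda>k. matrix_power G k *v (u0 - u)) \<longlonglongrightarrow> y"
    using powers by blast
  have "M *v (u + y) = b"
    using sol kernel[OF y(1)] by (simp add: matrix_vector_right_distrib)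
  moreover have "(\<lambda>k. ((\<lambda>v. G *v v + c) ^^ k) u0) \<longlonglongrightarrow> u + y"
    unfolding iterate by (intro tendsto_add tendsto_const y(2))
  ultimately show "\<exists>u. M *v u = b \<and> (\<lambda>k. ((\<lambda>v. G *v v + c) ^^ k) u0) \<longlonglongrightarrow> u"
    by blast
qed

theorem corollary1:
  fixes A AP AS Pa :: "complex^'n^'n"
    and C CP CS Pb :: "complex^'m^'m"
    and B BP BS :: "complex^'n^'m"
    and b :: "complex^('n + 'm)"
  assumes mn: "CARD('m) \<le> CARD('n)"
    and A_pd: "pos_def A" and C_psd: "pos_semidef C"
    and sing: "\<not> invertible (block A (cadj B) (- B) C)"
    and consistent: "\<exists>u. block A (cadj B) (- B) C *v u = b"
    and A_split: "A = AP + AS" and AP_pd: "pos_def AP" and AS_skew: "skew_hermitian AS"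
    and C_split: "C = CP + CS" and CP_psd: "pos_semidef CP" and CS_skew: "skew_hermitian CS"
    and B_split: "B = BP + BS"
    and Pa_hpd: "hpd Pa" and Pb_hpd: "hpd Pb"
    and null_incl: "nullsp (C + cadj C) \<subseteq> nullsp C"
    and conds:
      "(\<forall>r\<in>nullsp (C + cadj C). r \<noteq> 0 \<longrightarrow>
          qform (Pb + CS ** matrix_inv Pb ** cadj CS) r \<noteq> qform (BS ** matrix_inv Pa ** cadj BP) r)
     \<or> (\<forall>r\<in>nullsp (C + cadj C). r \<noteq> 0 \<longrightarrow>
          Im (qform (BS ** matrix_inv Pa ** cadj BP) r) = 0 \<and> Re (qform (BS ** matrix_inv Pa ** cadj BP) r) \<le> 0)
     \<or> nullsp (C + cadj C) \<subseteq> nullsp (cadj BS) \<union> nullsp (cadj BP)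
     \<or> (pos_def C \<or> BS = 0 \<or> BP = 0)"
  shows "let \<P> = block AP (cadj BP) (- BP) CP;
             \<S> = block AS (cadj BS) (- BS) CS;
             \<Sigma> = block Pa 0 0 Pb;
             \<Gamma> = matrix_inv (\<Sigma> + \<S>) ** (\<Sigma> - \<P>) ** matrix_inv (\<Sigma> + \<P>) ** (\<Sigma> - \<S>);
             c = (2::complex) *s (matrix_inv (\<Sigma> + \<S>) ** \<Sigma> ** matrix_inv (\<Sigma> + \<P>) *v b)
         in semi_convergent \<Gamma> c (block A (cadj B) (- B) C) b"
proof -
  interpret epss_blocks AP AS Pa C CP CS Pb BP BS
    by unfold_locales (fact AP_pd AS_skew C_split CP_psd CS_skew Pa_hpd Pb_hpd)+
  let ?Sg = "block Pa 0 0 Pb" and ?P = "block AP (cadj BP) (- BP) CP"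
    and ?S = "block AS (cadj BS) (- BS) CS"
  have saddle: "block A (cadj B) (- B) C = ?P + ?S"
    by (simp add: block_add A_split B_split C_split cadj_add)
  obtain u where u: "(?P + ?S) *v u = b"
    using consistent saddle by auto
  have unimodular: "l = 1" if "x \<noteq> 0" "iteration_matrix *v x = l *s x" "cmod l = 1" for x l
    using unimodular_eigenvalue_eq_1[OF null_incl conditions_imp_separated[OF Pb_hpd conds] that] .
  have "semi_convergent iteration_matrix
      (2 *s (matrix_inv (?Sg + ?S) ** ?Sg ** matrix_inv (?Sg + ?P) *v b)) (?P + ?S) b"
    by (rule semi_convergent_if_powers_converge[OF u iteration_fixed_point[OF u]
          fixed_point_in_kernel matrix_power_tendsto_fixed_point[OF unimodular]])
  then show ?thesis
    unfolding Let_def saddle iteration_matrix_def .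
qed

end
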